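(* Assume the standing assumptions (P1)–(P6) described in the context. Let $(f_0,t_0)\in\mathrm{Dom}\,\mathcal P$ and suppose the Volterra problem VP$(f_0,t_0)$ has two solutions $\varphi\in C([t_0,T),F)$ and $\varphi'\in C([t_0,T'),F)$. Then $\varphi(t)=\varphi'(t)$ for all $t\in[t_0,\min(T,T'))$.
   Context: All Banach spaces are over a common field ($\mathbb R$ or $\mathbb C$). For Banach spaces $X,Y$, $X\hookrightarrow Y$ means that $X$ is a dense linear subspace of $Y$ and the inclusion is continuous. Standing assumptions: (P1) $F_+,F,F_-$ are Banach spaces with norms $\|\cdot\|_+,\|\cdot\|,\|\cdot\|_-$ and $F_+\hookrightarrow F\hookrightarrow F_-$; $B(f_0,r):=\{f\in F:\|f-f_0\|<r\}$. (P2) $\mathcal A:F_+\to F_-$ is linear and on $F_+$ the norm $\|\cdot\|_+$ is equivalent to $f\mapsto\|f\|_-+\|\mathcal Af\|_-$. (P3) $\mathcal A$, viewed as a densely defined operator in $F_-$ with domain $F_+$, generates a strongly continuous semigroup $(e^{t\mathcal A})_{t\ge0}$ on $F_-$. (P4) $e^{t\mathcal A}(F)\subset F$ for $t\ge0$, $(f,t)\mapsto e^{t\mathcal A}f$ is continuous from $F\times[0,\infty)$ to $F$, and $u\in C([0,\infty),(0,\infty))$ satisfies $\|e^{t\mathcal A}f\|\le u(t)\|f\|$. (P5) $e^{t\mathcal A}(F_-)\subset F$ for $t>0$, $(f,t)\mapsto e^{t\mathcal A}f$ is continuous from $F_-\times(0,\infty)$ to $F$, and $u_-\in C((0,\infty),(0,\infty))$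 satisfies $\|e^{t\mathcal A}f\|\le u_-(t)\|f\|_-$ for $t>0$, $f\in F_-$, with $u_-(t)=O(t^{-(1-\sigma)})$ as $t\to0^+$ for some $\sigma\in(0,1]$. (P6) $\mathcal P:\mathrm{Dom}\,\mathcal P\subset F\times\mathbb R\to F_-$; the domain is semi-open (for each $(f_0,t_0)\in\mathrm{Dom}\,\mathcal P$ there are $\delta,r\in(0,+\infty]$ with $B(f_0,r)\times[t_0,t_0+\delta)\subset\mathrm{Dom}\,\mathcal P$), and for every closed bounded $\mathcal C\subset F\times\mathbb R$ with $\mathcal C\subset\mathrm{Dom}\,\mathcal P$ there are $L,M\ge0$ with $\|\mathcal P(f,t)-\mathcal P(f',t')\|_-\le L\|f-f'\|+M|t-t'|$ on $\mathcal C$. A solution of the Volterra problem VP$(f_0,t_0)$ on $[t_0,T)$ ($T\in(t_0,+\infty]$) is a $\varphi\in C([t_0,T),F)$ whose graph $\{(\varphi(t),t)\}$ lies in $\mathrm{Dom}\,\mathcal P$ and with $\varphi(t)=e^{(t-t_0)\mathcal A}f_0+\int_{t_0}^te^{(t-s)\mathcal A}\mathcal P(\varphi(s),s)\,ds$ for all $t\in[t_0,T)$. *)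

theory Defs
  imports "HOL-Analysis.Analysis" "HOL-Library.Landau_Symbols"
begin

text \<open>Model: F_- is a Banach type 'm, F is a Banach type 'f, F_+ is a Banach type 'p;
  the continuous dense inclusions are injective bounded linear maps
  i :: 'f \<Rightarrow> 'm (F into F_-) and j :: 'p \<Rightarrow> 'f (F_+ into F).\<close>

definition dense_embedding :: "('a::real_normed_vector \<Rightarrow> 'b::real_normed_vector) \<Rightarrow> bool" where
  "dense_embedding i \<longleftrightarrow> bounded_linear i \<and> inj i \<and> closure (range i) = UNIV"

definition P1 :: "('f::banach \<Rightarrow> 'm::banach) \<Rightarrow> ('p::banach \<Rightarrow> 'f) \<Rightarrow> bool" where
  "P1 i j \<longleftrightarrow> dense_embedding i \<and> dense_embedding j"

definition P2 :: "('f::banach \<Rightarrow> 'm::banach) \<Rightarrow> ('p::banach \<Rightarrow> 'f) \<Rightarrow> ('p \<Rightarrow> 'm) \<Rightarrow> bool" where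
  "P2 i j A \<longleftrightarrow> linear A \<and>
     (\<exists>c C. 0 < c \<and> 0 < C \<and>
        (\<forall>p. c * norm p \<le> norm (i (j p)) + norm (A p)
            \<and> norm (i (j p)) + norm (A p) \<le> C * norm p))"

definition strongly_continuous_semigroup :: "(real \<Rightarrow> 'm::banach \<Rightarrow> 'm) \<Rightarrow> bool" where
  "strongly_continuous_semigroup S \<longleftrightarrow>
     (\<forall>t\<ge>0. bounded_linear (S t)) \<and> S 0 = id \<and>
     (\<forall>t\<ge>0. \<forall>s\<ge>0. S (t + s) = S t \<circ> S s) \<and>
     (\<forall>x. continuous_on {0..} (\<lambda>t. S t x))"

text \<open>The infinitesimal generator of S is the operator A with domain D (given as the
  injective parametrisation E :: 'p \<Rightarrow> 'm of the domain), i.e. the domain of the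
  generator is exactly range E and the generator maps E p to A p.\<close>
definition generates :: "('p \<Rightarrow> 'm::banach) \<Rightarrow> ('p \<Rightarrow> 'm) \<Rightarrow> (real \<Rightarrow> 'm \<Rightarrow> 'm) \<Rightarrow> bool" where
  "generates E A S \<longleftrightarrow> strongly_continuous_semigroup S \<and>
     (\<forall>x. (\<exists>y. ((\<lambda>h. inverse h *\<^sub>R (S h x - x)) \<longlongrightarrow> y) (at_right 0)) \<longleftrightarrow> x \<in> range E) \<and>
     (\<forall>p. ((\<lambda>h. inverse h *\<^sub>R (S h (E p) - E p)) \<longlongrightarrow> A p) (at_right 0))"

definition P3 :: "('f::banach \<Rightarrow> 'm::banach) \<Rightarrow> ('p::banach \<Rightarrow> 'f) \<Rightarrow> ('p \<Rightarrow> 'm) \<Rightarrow> (real \<Rightarrow> 'm \<Rightarrow> 'm) \<Rightarrow> bool" where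
  "P3 i j A S \<longleftrightarrow> generates (i \<circ> j) A S"

text \<open>(P4): restriction of the semigroup to F, read back in F via inv i.\<close>
definition P4 :: "('f::banach \<Rightarrow> 'm::banach) \<Rightarrow> (real \<Rightarrow> 'm \<Rightarrow> 'm) \<Rightarrow> (real \<Rightarrow> real) \<Rightarrow> bool" where
  "P4 i S u \<longleftrightarrow>
     (\<forall>t\<ge>0. \<forall>f. S t (i f) \<in> range i) \<and>
     continuous_on (UNIV \<times> {0..}) (\<lambda>(f, t). inv i (S t (i f))) \<and>
     continuous_on {0..} u \<and> (\<forall>t\<ge>0. 0 < u t) \<and>
     (\<forall>t\<ge>0. \<forall>f. norm (inv i (S t (i f))) \<le> u t * norm f)"

definition P5 :: "('f::banach \<Rightarrow> 'm::banach) \<Rightarrow> (real \<Rightarrow> 'm \<Rightarrow> 'm) \<Rightarrow> (real \<Rightarrow> real) \<Rightarrow> real \<Rightarrow> bool" where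
  "P5 i S um \<sigma> \<longleftrightarrow>
     (\<forall>t>0. \<forall>x. S t x \<in> range i) \<and>
     continuous_on (UNIV \<times> {0<..}) (\<lambda>(x, t). inv i (S t x)) \<and>
     continuous_on {0<..} um \<and> (\<forall>t>0. 0 < um t) \<and>
     (\<forall>t>0. \<forall>x. norm (inv i (S t x)) \<le> um t * norm x) \<and>
     0 < \<sigma> \<and> \<sigma> \<le> 1 \<and>
     um \<in> O[at_right 0](\<lambda>t. t powr (-(1 - \<sigma>)))"

definition P6 :: "('f::banach \<times> real \<Rightarrow> 'm::banach) \<Rightarrow> ('f \<times> real) set \<Rightarrow> bool" where
  "P6 P Dom \<longleftrightarrow>
     (\<forall>f0 t0. (f0, t0) \<in> Dom \<longrightarrow>
        (\<exists>\<delta> r. 0 < \<delta> \<and> 0 < r \<and> ball f0 r \<times> {t0..<t0 + \<delta>} \<subseteq> Dom)) \<and>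
     (\<forall>C. closed C \<and> bounded C \<and> C \<subseteq> Dom \<longrightarrow>
        (\<exists>L M. 0 \<le> L \<and> 0 \<le> M \<and>
           (\<forall>f t f' t'. (f, t) \<in> C \<longrightarrow> (f', t') \<in> C \<longrightarrow>
              norm (P (f, t) - P (f', t')) \<le> L * norm (f - f') + M * \<bar>t - t'\<bar>)))"

text \<open>The Volterra equation is read in F_-
  (i.e. after the inclusion i), the integral being the (Henstock-Kurzweil = Riemann here)
  integral of an F_- valued function, required to exist.\<close>
definition VP_solution ::
  "('f::banach \<Rightarrow> 'm::banach) \<Rightarrow> (real \<Rightarrow> 'm \<Rightarrow> 'm) \<Rightarrow> ('f \<times> real \<Rightarrow> 'm) \<Rightarrow> ('f \<times> real) set
   \<Rightarrow> 'f \<Rightarrow> real \<Rightarrow> ereal \<Rightarrow> (real \<Rightarrow> 'f) \<Rightarrow> bool" where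
  "VP_solution i S P Dom f0 t0 T \<phi> \<longleftrightarrow>
     ereal t0 < T \<and>
     continuous_on {t. t0 \<le> t \<and> ereal t < T} \<phi> \<and>
     (\<forall>t. t0 \<le> t \<and> ereal t < T \<longrightarrow> (\<phi> t, t) \<in> Dom) \<and>
     (\<forall>t. t0 \<le> t \<and> ereal t < T \<longrightarrow>
        ((\<lambda>s. S (t - s) (P (\<phi> s, s))) has_integral (i (\<phi> t) - S (t - t0) (i f0))) {t0..t})"

end

theory Submission
  imports Defs "HOL-Real_Asymp.Real_Asymp"
begin

text \<open>A Gronwall argument with a weakly singular kernel. The difference \<open>d = \<phi> - \<phi>'\<close> of two
  solutions satisfies \<open>i (d t) = \<integral>[t0, t] S (t - s) (P (\<phi> s, s) - P (\<phi>' s, s)) ds\<close>. On the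
  compact union of the two graphs \<open>P\<close> is Lipschitz, so by the smoothing estimate (P5) the
  integrand, read in \<open>F\<close>, has norm at most \<open>K L (t - s) powr (\<sigma> - 1) \<parallel>d s\<parallel>\<close>. If \<open>d\<close> vanishes
  on \<open>[t0, a]\<close> and \<open>M\<close> is the maximum of \<open>\<parallel>d\<parallel>\<close> on \<open>[a, a + \<delta>]\<close>, this gives
  \<open>M \<le> K L \<delta> powr \<sigma> / \<sigma> * M\<close>, hence \<open>M = 0\<close> for small \<open>\<delta>\<close>; finitely many such steps cover
  \<open>[t0, t1]\<close>. Only (P1), (P3), (P5) and (P6) are needed.\<close>

lemma has_integral_powr_kernel:
  fixes c e t \<sigma> :: real
  assumes "c \<le> e" "e < t" "0 < \<sigma>"
  shows "((\<lambda>s. (t - s) powr (\<sigma> - 1)) has_integral ((t - c) powr \<sigma> - (t - e) powr \<sigma>) / \<sigma>) {c..e}"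
proof -
  have "((\<lambda>s. (t - s) powr (\<sigma> - 1)) has_integral
          (- ((t - e) powr \<sigma> / \<sigma>)) - (- ((t - c) powr \<sigma> / \<sigma>))) {c..e}"
  proof (rule fundamental_theorem_of_calculus[OF assms(1)])
    fix x assume "x \<in> {c..e}"
    then have "0 < t - x" using assms by auto
    then have "((\<lambda>s. - ((t - s) powr \<sigma> / \<sigma>)) has_real_derivative (t - x) powr (\<sigma> - 1)) (at x)"
      using assms(3) by (auto intro!: derivative_eq_intros simp: field_simps)
    then show "((\<lambda>s. - ((t - s) powr \<sigma> / \<sigma>)) has_vector_derivative (t - x) powr (\<sigma> - 1))
                 (at x within {c..e})"
      using has_real_derivative_iff_has_vector_derivative has_vector_derivative_at_within by blast
  qed
  then show ?thesis by (simp add: field_simps diff_divide_distrib)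
qed

lemma norm_integral_le_powr_kernel:
  fixes h :: "real \<Rightarrow> 'a::banach"
  assumes "a \<le> c" "c \<le> e" "e < t" "0 < \<sigma>"
    and h_cont: "continuous_on {a..<t} h"
    and h_bound: "\<And>s. s \<in> {a..<t} \<Longrightarrow> norm (h s) \<le> B * (t - s) powr (\<sigma> - 1)"
  shows "h integrable_on {c..e}"
    and "norm (integral {c..e} h) \<le> B * ((t - c) powr \<sigma> - (t - e) powr \<sigma>) / \<sigma>"
proof -
  have sub: "{c..e} \<subseteq> {a..<t}" using assms by auto
  show h_int: "h integrable_on {c..e}"
    using integrable_continuous_interval continuous_on_subset[OF h_cont sub] by blast
  have kernel: "((\<lambda>s. B * (t - s) powr (\<sigma> - 1)) has_integral
                  B * ((t - c) powr \<sigma> - (t - e) powr \<sigma>) / \<sigma>) {c..e}"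
    using has_integral_mult_right[OF has_integral_powr_kernel[OF assms(2-4)]] by simp
  have "norm (integral {c..e} h) \<le> integral {c..e} (\<lambda>s. B * (t - s) powr (\<sigma> - 1))"
    using sub h_bound by (intro integral_norm_bound_integral[OF h_int has_integral_integrable[OF kernel]]) auto
  then show "norm (integral {c..e} h) \<le> B * ((t - c) powr \<sigma> - (t - e) powr \<sigma>) / \<sigma>"
    using integral_unique[OF kernel] by simp
qed

lemma Cauchy_if_dist_le_tail:
  fixes X :: "nat \<Rightarrow> 'a::metric_space"
  assumes "\<And>m n. n \<le> m \<Longrightarrow> dist (X m) (X n) \<le> e n" and "e \<longlonglongrightarrow> 0"
  shows "Cauchy X"
proof (rule CauchyI')
  fix \<epsilon> :: real assume "0 < \<epsilon>"
  then obtain M where "\<And>n. n \<ge> M \<Longrightarrow> \<bar>e n\<bar> < \<epsilon>"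
    using \<open>e \<longlonglongrightarrow> 0\<close> by (auto simp: lim_sequentially dist_real_def)
  then show "\<exists>M. \<forall>m\<ge>M. \<forall>n>m. dist (X m) (X n) < \<epsilon>"
    using assms(1) by (metis abs_ge_self dist_commute le_less_trans less_imp_le order_trans)
qed

lemma integral_tendsto_at_powr_singularity:
  fixes h :: "real \<Rightarrow> 'a::banach" and c :: "nat \<Rightarrow> real"
  assumes "a < t" "0 < \<sigma>"
    and h_cont: "continuous_on {a..<t} h"
    and h_bound: "\<And>s. s \<in> {a..<t} \<Longrightarrow> norm (h s) \<le> B * (t - s) powr (\<sigma> - 1)"
    and c: "\<And>n. c n \<in> {a..<t}" "incseq c" "c \<longlonglongrightarrow> t"
  obtains z where "(\<lambda>n. integral {a..c n} h) \<longlonglongrightarrow> z" "norm z \<le> B * (t - a) powr \<sigma> / \<sigma>"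
proof -
  note kernel = norm_integral_le_powr_kernel[OF _ _ _ \<open>0 < \<sigma>\<close> h_cont h_bound]
  have "0 \<le> norm (h a)" by simp
  also have "\<dots> \<le> B * (t - a) powr (\<sigma> - 1)" using h_bound \<open>a < t\<close> by simp
  finally have "0 \<le> B" using \<open>a < t\<close> by (simp add: zero_le_mult_iff)
  have c_le: "a \<le> c n" "c n < t" for n using c(1)[of n] by auto
  have "(\<lambda>n. t - c n) \<longlonglongrightarrow> 0"
    using tendsto_diff[OF tendsto_const[of t] c(3)] by simp
  then have "(\<lambda>n. B * (t - c n) powr \<sigma> / \<sigma>) \<longlonglongrightarrow> B * 0 / \<sigma>"
    using c_le \<open>0 < \<sigma>\<close> by (intro tendsto_intros tendsto_zero_powrI) (auto simp: less_imp_le)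
  then have tail: "(\<lambda>n. B * (t - c n) powr \<sigma> / \<sigma>) \<longlonglongrightarrow> 0" by simp
  have "dist (integral {a..c m} h) (integral {a..c n} h) \<le> B * (t - c n) powr \<sigma> / \<sigma>"
    if "n \<le> m" for m n
  proof -
    have c_mono: "c n \<le> c m" using c(2) that by (simp add: incseq_def)
    have "integral {a..c m} h - integral {a..c n} h = integral {c n..c m} h"
      using Henstock_Kurzweil_Integration.integral_combine[OF c_le(1) c_mono]
        kernel(1)[of a "c m"] c_le by (metis add_diff_cancel_left' order_refl)
    then have "dist (integral {a..c m} h) (integral {a..c n} h)
               \<le> B * ((t - c n) powr \<sigma> - (t - c m) powr \<sigma>) / \<sigma>"
      using kernel(2)[OF c_le(1) c_mono c_le(2)] by (simp add: dist_norm)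
    also have "\<dots> \<le> B * (t - c n) powr \<sigma> / \<sigma>"
      using \<open>0 \<le> B\<close> \<open>0 < \<sigma>\<close> by (intro divide_right_mono mult_left_mono) auto
    finally show ?thesis .
  qed
  then have "Cauchy (\<lambda>n. integral {a..c n} h)" using tail by (rule Cauchy_if_dist_le_tail)
  then obtain z where z: "(\<lambda>n. integral {a..c n} h) \<longlonglongrightarrow> z"
    using Cauchy_convergent_iff convergent_def by blast
  have "norm (integral {a..c n} h) \<le> B * (t - a) powr \<sigma> / \<sigma>" for n
  proof -
    have "norm (integral {a..c n} h) \<le> B * ((t - a) powr \<sigma> - (t - c n) powr \<sigma>) / \<sigma>"
      using kernel(2)[OF order_refl c_le(1) c_le(2)] .
    also have "\<dots> \<le> B * (t - a) powr \<sigma> / \<sigma>"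
      using \<open>0 \<le> B\<close> \<open>0 < \<sigma>\<close> by (intro divide_right_mono mult_left_mono) auto
    finally show ?thesis .
  qed
  then have "norm z \<le> B * (t - a) powr \<sigma> / \<sigma>"
    using tendsto_norm[OF z] by (intro LIMSEQ_le_const2) auto
  with z that show ?thesis by blast
qed

text \<open>The \<open>F\<close>-valued integrand \<open>h\<close> may blow up at \<open>t\<close>; its integral is obtained as the limit of the
  integrals over \<open>[a, c n]\<close> with \<open>c n\<close> increasing to \<open>t\<close>, and \<open>i\<close> carries that limit to \<open>y\<close>.\<close>

lemma has_integral_image_of_singular_integrand:
  fixes i :: "'f::banach \<Rightarrow> 'm::banach"
  assumes i: "bounded_linear i" and "a < t" "0 < \<sigma>"
    and F: "(F has_integral y) {a..t}"
    and h_cont: "continuous_on {a..<t} h"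
    and h_bound: "\<And>s. s \<in> {a..<t} \<Longrightarrow> norm (h s) \<le> B * (t - s) powr (\<sigma> - 1)"
    and F_eq: "\<And>s. s \<in> {a..<t} \<Longrightarrow> i (h s) = F s"
  obtains x where "i x = y" "norm x \<le> B * (t - a) powr \<sigma> / \<sigma>"
proof -
  define c where "c n = t - (t - a) / (real n + 1)" for n
  have c_in: "c n \<in> {a..<t}" for n
    using \<open>a < t\<close> by (auto simp: c_def field_simps intro: mult_right_mono)
  have "incseq c"
    using \<open>a < t\<close> by (auto simp: incseq_def c_def intro!: divide_left_mono)
  have "c \<longlonglongrightarrow> t"
    unfolding c_def by real_asymp
  obtain z where z: "(\<lambda>n. integral {a..c n} h) \<longlonglongrightarrow> z" "norm z \<le> B * (t - a) powr \<sigma> / \<sigma>"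
    using integral_tendsto_at_powr_singularity[OF \<open>a < t\<close> \<open>0 < \<sigma>\<close> h_cont h_bound c_in
        \<open>incseq c\<close> \<open>c \<longlonglongrightarrow> t\<close>] .
  have "i (integral {a..c n} h) = integral {a..c n} F" for n
  proof -
    have "{a..c n} \<subseteq> {a..<t}" using c_in[of n] by auto
    then have "h integrable_on {a..c n}"
      using integrable_continuous_interval continuous_on_subset[OF h_cont] by blast
    then have "i (integral {a..c n} h) = integral {a..c n} (i \<circ> h)"
      by (rule integral_linear[OF _ i, symmetric])
    also have "\<dots> = integral {a..c n} F"
      using F_eq \<open>{a..c n} \<subseteq> {a..<t}\<close> by (intro integral_cong) auto
    finally show ?thesis .
  qed
  moreover have "(\<lambda>n. integral {a..c n} F) \<longlonglongrightarrow> integral {a..t} F"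
    using continuous_on_tendsto_compose[OF indefinite_integral_continuous_1[OF has_integral_integrable[OF F]]
        \<open>c \<longlonglongrightarrow> t\<close>] c_in \<open>a < t\<close> by (simp add: less_imp_le)
  ultimately have "(\<lambda>n. i (integral {a..c n} h)) \<longlonglongrightarrow> y"
    using integral_unique[OF F] by simp
  then have "i z = y"
    using bounded_linear.tendsto[OF i z(1)] LIMSEQ_unique by blast
  with z(2) that show ?thesis by blast
qed

lemma vanishes_if_local_contraction:
  fixes d :: "real \<Rightarrow> 'a::real_normed_vector"
  assumes d_cont: "continuous_on {t0..t1} d" and "d t0 = 0" and "0 < \<delta>" and "c < 1"
    and contraction: "\<And>a t D. t0 \<le> a \<Longrightarrow> a < t \<Longrightarrow> t \<le> t1 \<Longrightarrow> t - a \<le> \<delta> \<Longrightarrow>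
           \<forall>s\<in>{t0..a}. d s = 0 \<Longrightarrow> \<forall>s\<in>{a..t}. norm (d s) \<le> D \<Longrightarrow> norm (d t) \<le> c * D"
    and "s \<in> {t0..t1}"
  shows "d s = 0"
proof -
  have "\<forall>s\<in>{t0..min t1 (t0 + real n * \<delta>)}. d s = 0" for n
  proof (induction n)
    case 0
    then show ?case using \<open>d t0 = 0\<close> by auto
  next
    case (Suc n)
    define a where "a = min t1 (t0 + real n * \<delta>)"
    define b where "b = min t1 (t0 + real (Suc n) * \<delta>)"
    have IH: "\<forall>s\<in>{t0..a}. d s = 0" using Suc.IH unfolding a_def .
    have "b - a \<le> \<delta>" "a \<le> b" "b \<le> t1"
      using \<open>0 < \<delta>\<close> by (auto simp: a_def b_def algebra_simps)
    show ?case
    proof (cases "t0 \<le> a")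
      case False
      then have "t1 < t0" using \<open>0 < \<delta>\<close> by (simp add: a_def)
      then show ?thesis by simp
    next
      case True
      then have "continuous_on {a..b} (\<lambda>s. norm (d s))"
        using \<open>b \<le> t1\<close> by (intro continuous_on_norm continuous_on_subset[OF d_cont]) auto
      moreover have "{a..b} \<noteq> {}" using \<open>a \<le> b\<close> by simp
      ultimately obtain tm where tm: "tm \<in> {a..b}" and max: "\<forall>s\<in>{a..b}. norm (d s) \<le> norm (d tm)"
        using continuous_attains_sup[OF compact_Icc] by blast
      have "norm (d tm) = 0"
      proof (cases "tm = a")
        case True
        then show ?thesis using IH \<open>t0 \<le> a\<close> by simp
      next
        case False
        with tm \<open>b - a \<le> \<delta>\<close> \<open>b \<le> t1\<close> have "a < tm" "tm \<le> t1" "tm - a \<le> \<delta>" by auto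
        moreover have "\<forall>s\<in>{a..tm}. norm (d s) \<le> norm (d tm)" using max tm by auto
        ultimately have "norm (d tm) \<le> c * norm (d tm)" using contraction[OF True _ _ _ IH] by blast
        then have "norm (d tm) * (1 - c) \<le> 0" by (simp add: algebra_simps)
        then show ?thesis using \<open>c < 1\<close> by (simp add: mult_le_0_iff)
      qed
      then have "\<forall>s\<in>{a..b}. d s = 0" using max by auto
      with IH show ?thesis
        unfolding b_def[symmetric] by (metis atLeastAtMost_iff linorder_le_cases)
    qed
  qed
  moreover obtain n where "t1 - t0 \<le> real n * \<delta>"
    using real_arch_simple[of "(t1 - t0) / \<delta>"] \<open>0 < \<delta>\<close> by (auto simp: divide_le_eq)
  then have "min t1 (t0 + real n * \<delta>) = t1" by simp
  ultimately show ?thesis using \<open>s \<in> {t0..t1}\<close> by metis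
qed

lemma has_integral_Icc_drop_zero_part:
  fixes f :: "real \<Rightarrow> 'a::banach"
  assumes f: "(f has_integral y) {t0..t}" and "t0 \<le> a" "a \<le> t"
    and zero: "\<And>s. s \<in> {t0..a} \<Longrightarrow> f s = 0"
  shows "(f has_integral y) {a..t}"
proof -
  have "f integrable_on {a..t}"
    by (rule integrable_subinterval_real[OF has_integral_integrable[OF f]]) (use \<open>t0 \<le> a\<close> in auto)
  moreover have "(f has_integral 0) {t0..a}"
    using zero by (rule has_integral_is_0)
  ultimately have "(f has_integral 0 + integral {a..t} f) {t0..t}"
    using has_integral_combine[OF \<open>t0 \<le> a\<close> \<open>a \<le> t\<close>] by blast
  then have "integral {a..t} f = y"
    using has_integral_unique[OF f] by simp
  with \<open>f integrable_on {a..t}\<close> show ?thesis by blast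
qed

lemma exists_powr_small:
  fixes C \<sigma> r :: real
  assumes "0 < \<sigma>" "0 < r"
  obtains \<delta> where "0 < \<delta>" "\<delta> < r" "C * \<delta> powr \<sigma> < 1"
proof -
  have "((\<lambda>\<delta>. C * \<delta> powr \<sigma>) \<longlongrightarrow> C * 0 powr \<sigma>) (at_right 0)"
    using \<open>0 < \<sigma>\<close> by (intro tendsto_intros) (auto simp: eventually_at_right_field intro: exI[of _ 1])
  then have "\<forall>\<^sub>F \<delta> in at_right 0. C * \<delta> powr \<sigma> < 1"
    using \<open>0 < \<sigma>\<close> by (intro order_tendstoD) auto
  then obtain b where "0 < b" and b: "\<And>\<delta>. 0 < \<delta> \<Longrightarrow> \<delta> < b \<Longrightarrow> C * \<delta> powr \<sigma> < 1"
    unfolding eventually_at_right_field by auto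
  show ?thesis
    using that[of "min (b / 2) (r / 2)"] b[of "min (b / 2) (r / 2)"] \<open>0 < b\<close> \<open>0 < r\<close> by auto
qed

locale singular_smoothing =
  fixes i :: "'f::banach \<Rightarrow> 'm::banach" and S :: "real \<Rightarrow> 'm \<Rightarrow> 'm" and K r \<sigma> :: real
  assumes bounded_linear_i: "bounded_linear i" and inj_i: "inj i"
    and linear_S: "\<And>t. 0 \<le> t \<Longrightarrow> linear (S t)"
    and S_in_range: "\<And>t x. 0 < t \<Longrightarrow> S t x \<in> range i"
    and continuous_S: "continuous_on (UNIV \<times> {0<..}) (\<lambda>(x, t). inv i (S t x))"
    and norm_S_le: "\<And>t x. 0 < t \<Longrightarrow> t < r \<Longrightarrow> norm (inv i (S t x)) \<le> K * t powr (\<sigma> - 1) * norm x"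
    and K_nonneg: "0 \<le> K" and r_pos: "0 < r" and \<sigma>_pos: "0 < \<sigma>"
begin

lemma norm_le_if_mild_integral:
  assumes "a < t" "t - a < r"
    and g_cont: "continuous_on {a..t} g"
    and g_bound: "\<And>s. s \<in> {a..t} \<Longrightarrow> norm (g s) \<le> B"
    and x: "((\<lambda>s. S (t - s) (g s)) has_integral i x) {a..t}"
  shows "norm x \<le> K * B * (t - a) powr \<sigma> / \<sigma>"
proof -
  define h where "h s = inv i (S (t - s) (g s))" for s
  have "continuous_on {a..<t} (\<lambda>s. (g s, t - s))"
    by (intro continuous_on_Pair continuous_on_subset[OF g_cont] continuous_intros) auto
  moreover have "(\<lambda>s. (g s, t - s)) ` {a..<t} \<subseteq> UNIV \<times> {0<..}" by auto
  ultimately have "continuous_on {a..<t} ((\<lambda>(x, t). inv i (S t x)) \<circ> (\<lambda>s. (g s, t - s)))"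
    using continuous_on_compose continuous_on_subset[OF continuous_S] by blast
  then have h_cont: "continuous_on {a..<t} h" by (simp add: h_def o_def)
  have h_bound: "norm (h s) \<le> K * B * (t - s) powr (\<sigma> - 1)" if "s \<in> {a..<t}" for s
  proof -
    have "norm (h s) \<le> K * (t - s) powr (\<sigma> - 1) * norm (g s)"
      unfolding h_def using that \<open>t - a < r\<close> by (intro norm_S_le) auto
    also have "\<dots> \<le> K * (t - s) powr (\<sigma> - 1) * B"
      using that g_bound K_nonneg by (intro mult_left_mono) auto
    finally show ?thesis by (simp add: algebra_simps)
  qed
  have "i (h s) = S (t - s) (g s)" if "s \<in> {a..<t}" for s
    unfolding h_def using S_in_range[of "t - s"] that by (simp add: f_inv_into_f)
  then obtain y where "i y = i x" "norm y \<le> K * B * (t - a) powr \<sigma> / \<sigma>"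
    using has_integral_image_of_singular_integrand[OF bounded_linear_i \<open>a < t\<close> \<sigma>_pos x h_cont h_bound]
    by blast
  with inj_i show ?thesis by (simp add: inj_eq)
qed

lemma norm_le_if_volterra_vanishes_before:
  assumes g_cont: "continuous_on {t0..t1} g" and "0 \<le> L"
    and g_bound: "\<And>s. s \<in> {t0..t1} \<Longrightarrow> norm (g s) \<le> L * norm (d s)"
    and volterra: "((\<lambda>s. S (t - s) (g s)) has_integral i (d t)) {t0..t}"
    and "t0 \<le> a" "a < t" "t \<le> t1" "t - a < r"
    and zero: "\<forall>s\<in>{t0..a}. d s = 0" and D: "\<forall>s\<in>{a..t}. norm (d s) \<le> D"
  shows "norm (d t) \<le> K * L * D * (t - a) powr \<sigma> / \<sigma>"
proof -
  have "((\<lambda>s. S (t - s) (g s)) has_integral i (d t)) {a..t}"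
  proof (rule has_integral_Icc_drop_zero_part[OF volterra \<open>t0 \<le> a\<close>])
    fix s assume "s \<in> {t0..a}"
    then have "g s = 0" using g_bound[of s] zero \<open>t \<le> t1\<close> \<open>a < t\<close> by auto
    then show "S (t - s) (g s) = 0"
      using linear_S[of "t - s"] \<open>s \<in> {t0..a}\<close> \<open>a < t\<close> by (simp add: linear_0)
  qed (use \<open>a < t\<close> in auto)
  moreover have "norm (g s) \<le> L * D" if "s \<in> {a..t}" for s
    using g_bound[of s] D mult_left_mono[OF _ \<open>0 \<le> L\<close>] that \<open>t0 \<le> a\<close> \<open>t \<le> t1\<close>
    by (meson atLeastAtMost_iff order_trans)
  moreover have "continuous_on {a..t} g"
    using \<open>t0 \<le> a\<close> \<open>t \<le> t1\<close> by (intro continuous_on_subset[OF g_cont]) auto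
  ultimately have "norm (d t) \<le> K * (L * D) * (t - a) powr \<sigma> / \<sigma>"
    using \<open>t - a < r\<close> by (intro norm_le_if_mild_integral[OF \<open>a < t\<close>]) auto
  then show ?thesis by (simp add: mult.assoc)
qed

lemma homogeneous_volterra_vanishes:
  assumes d_cont: "continuous_on {t0..t1} d"
    and g_cont: "continuous_on {t0..t1} g" and "0 \<le> L"
    and g_bound: "\<And>s. s \<in> {t0..t1} \<Longrightarrow> norm (g s) \<le> L * norm (d s)"
    and volterra: "\<And>t. t \<in> {t0..t1} \<Longrightarrow> ((\<lambda>s. S (t - s) (g s)) has_integral i (d t)) {t0..t}"
    and "s \<in> {t0..t1}"
  shows "d s = 0"
proof -
  have "i (d t0) = 0"
    using volterra[of t0] \<open>s \<in> {t0..t1}\<close> by (simp add: has_integral_refl(2) has_integral_unique)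
  then have "d t0 = 0"
    using inj_i bounded_linear_i by (metis inj_eq linear_0 bounded_linear.linear)
  obtain \<delta> where "0 < \<delta>" "\<delta> < r" and small: "K * L / \<sigma> * \<delta> powr \<sigma> < 1"
    using exists_powr_small[OF \<sigma>_pos r_pos] .
  show ?thesis
  proof (rule vanishes_if_local_contraction[OF d_cont \<open>d t0 = 0\<close> \<open>0 < \<delta>\<close> small _ \<open>s \<in> {t0..t1}\<close>])
    fix a t D
    assume "t0 \<le> a" "a < t" "t \<le> t1" "t - a \<le> \<delta>"
      and zero: "\<forall>s\<in>{t0..a}. d s = 0" and D: "\<forall>s\<in>{a..t}. norm (d s) \<le> D"
    then have "norm (d t) \<le> K * L * D * (t - a) powr \<sigma> / \<sigma>"
      using \<open>\<delta> < r\<close>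
      by (intro norm_le_if_volterra_vanishes_before[OF g_cont \<open>0 \<le> L\<close> g_bound volterra]) auto
    also have "\<dots> \<le> K * L * D * \<delta> powr \<sigma> / \<sigma>"
    proof -
      have "0 \<le> D" using D \<open>a < t\<close> by (meson atLeastAtMost_iff less_imp_le norm_ge_zero order_refl order_trans)
      then show ?thesis
        using K_nonneg \<open>0 \<le> L\<close> \<sigma>_pos \<open>a < t\<close> \<open>t - a \<le> \<delta>\<close>
        by (intro divide_right_mono mult_left_mono powr_mono2) auto
    qed
    finally show "norm (d t) \<le> K * L / \<sigma> * \<delta> powr \<sigma> * D" by (simp add: algebra_simps)
  qed
qed

lemma has_integral_volterra_diff:
  assumes "((\<lambda>s. S (t - s) (g s)) has_integral i x - y) {t0..t}"
    and "((\<lambda>s. S (t - s) (g' s)) has_integral i x' - y) {t0..t}"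
  shows "((\<lambda>s. S (t - s) (g s - g' s)) has_integral i (x - x')) {t0..t}"
proof -
  have "i x - y - (i x' - y) = i (x - x')"
    using linear_diff[OF bounded_linear.linear[OF bounded_linear_i]] by simp
  then have "((\<lambda>s. S (t - s) (g s) - S (t - s) (g' s)) has_integral i (x - x')) {t0..t}"
    using has_integral_diff[OF assms] by simp
  moreover have "S (t - s) (g s) - S (t - s) (g' s) = S (t - s) (g s - g' s)" if "s \<in> {t0..t}" for s
    using linear_S[of "t - s"] that by (simp add: linear_diff)
  ultimately show ?thesis by (rule has_integral_cong[THEN iffD1, rotated])
qed

end

lemma singular_smoothing_if_P5:
  assumes "P1 i j" "P3 i j A S" "P5 i S um \<sigma>"
  obtains K r where "singular_smoothing i S K r \<sigma>"
proof -
  have "um \<in> O[at_right 0](\<lambda>t. t powr (-(1 - \<sigma>)))"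
    using assms(3) by (simp add: P5_def)
  then obtain K where "0 < K" and "\<forall>\<^sub>F t in at_right 0. norm (um t) \<le> K * norm (t powr (-(1 - \<sigma>)))"
    using landau_o.bigE by blast
  then obtain r where "0 < r" and um: "\<And>t. 0 < t \<Longrightarrow> t < r \<Longrightarrow> um t \<le> K * t powr (\<sigma> - 1)"
    unfolding eventually_at_right_field by force
  have "singular_smoothing i S K r \<sigma>"
  proof (rule singular_smoothing.intro)
    show "bounded_linear i" "inj i"
      using assms(1) by (auto simp: P1_def dense_embedding_def)
    show "linear (S t)" if "0 \<le> t" for t
      using assms(2) that
      by (auto simp: P3_def generates_def strongly_continuous_semigroup_def bounded_linear.linear)
    show "norm (inv i (S t x)) \<le> K * t powr (\<sigma> - 1) * norm x" if "0 < t" "t < r" for t x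
    proof -
      have "norm (inv i (S t x)) \<le> um t * norm x"
        using assms(3) \<open>0 < t\<close> by (simp add: P5_def)
      also have "\<dots> \<le> K * t powr (\<sigma> - 1) * norm x"
        using um[OF that] by (simp add: mult_right_mono)
      finally show ?thesis .
    qed
  qed (use assms(3) \<open>0 < K\<close> \<open>0 < r\<close> in \<open>auto simp: P5_def\<close>)
  with that show ?thesis .
qed

lemma VP_solution_on_Icc:
  assumes "VP_solution i S P Dom f0 t0 T \<phi>" and "ereal t1 < T"
  shows "continuous_on {t0..t1} \<phi>"
    and "\<And>s. s \<in> {t0..t1} \<Longrightarrow> (\<phi> s, s) \<in> Dom"
    and "\<And>t. t \<in> {t0..t1} \<Longrightarrow>
           ((\<lambda>s. S (t - s) (P (\<phi> s, s))) has_integral i (\<phi> t) - S (t - t0) (i f0)) {t0..t}"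
proof -
  have sub: "{t0..t1} \<subseteq> {t. t0 \<le> t \<and> ereal t < T}"
  proof
    fix s assume "s \<in> {t0..t1}"
    then have "ereal s \<le> ereal t1" by simp
    with \<open>s \<in> {t0..t1}\<close> show "s \<in> {t. t0 \<le> t \<and> ereal t < T}"
      using order.strict_trans1[OF _ \<open>ereal t1 < T\<close>] by simp
  qed
  then show "continuous_on {t0..t1} \<phi>"
    using assms(1) continuous_on_subset[OF _ sub] unfolding VP_solution_def by blast
  show "(\<phi> s, s) \<in> Dom" if "s \<in> {t0..t1}" for s
    using assms(1) sub that by (auto simp: VP_solution_def)
  show "((\<lambda>s. S (t - s) (P (\<phi> s, s))) has_integral i (\<phi> t) - S (t - t0) (i f0)) {t0..t}"
    if "t \<in> {t0..t1}" for t
    using assms(1) sub that by (auto simp: VP_solution_def)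
qed

lemma continuous_on_if_Lipschitz_along:
  fixes f :: "real \<Rightarrow> 'a::real_normed_vector" and q :: "real \<Rightarrow> 'b::real_normed_vector"
  assumes "continuous_on X f"
    and bound: "\<And>x y. x \<in> X \<Longrightarrow> y \<in> X \<Longrightarrow> norm (q y - q x) \<le> L * norm (f y - f x) + M * \<bar>y - x\<bar>"
  shows "continuous_on X q"
  unfolding continuous_on_def
proof
  fix x assume "x \<in> X"
  then have "(f \<longlongrightarrow> f x) (at x within X)"
    using \<open>continuous_on X f\<close> continuous_on_def by blast
  then have "((\<lambda>y. L * norm (f y - f x) + M * \<bar>y - x\<bar>) \<longlongrightarrow> L * norm (f x - f x) + M * \<bar>x - x\<bar>)
               (at x within X)"
    by (intro tendsto_intros)
  then have "((\<lambda>y. L * norm (f y - f x) + M * \<bar>y - x\<bar>) \<longlongrightarrow> 0) (at x within X)"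
    by simp
  then have "((\<lambda>y. q y - q x) \<longlongrightarrow> 0) (at x within X)"
  proof (rule Lim_null_comparison[rotated])
    show "\<forall>\<^sub>F y in at x within X. norm (q y - q x) \<le> L * norm (f y - f x) + M * \<bar>y - x\<bar>"
      using bound \<open>x \<in> X\<close> by (auto simp: eventually_at_filter)
  qed
  then show "(q \<longlongrightarrow> q x) (at x within X)" by (rule LIM_zero_cancel)
qed

lemma P6_Lipschitz_along_graphs:
  assumes "P6 P Dom" and \<phi>: "continuous_on {t0..t1} \<phi>" and \<psi>: "continuous_on {t0..t1} \<psi>"
    and "\<And>s. s \<in> {t0..t1} \<Longrightarrow> (\<phi> s, s) \<in> Dom" "\<And>s. s \<in> {t0..t1} \<Longrightarrow> (\<psi> s, s) \<in> Dom"
  obtains L where "0 \<le> L"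
    and "\<And>s. s \<in> {t0..t1} \<Longrightarrow> norm (P (\<phi> s, s) - P (\<psi> s, s)) \<le> L * norm (\<phi> s - \<psi> s)"
    and "continuous_on {t0..t1} (\<lambda>s. P (\<phi> s, s))" "continuous_on {t0..t1} (\<lambda>s. P (\<psi> s, s))"
proof -
  define C where "C = (\<lambda>s. (\<phi> s, s)) ` {t0..t1} \<union> (\<lambda>s. (\<psi> s, s)) ` {t0..t1}"
  have "compact C"
    unfolding C_def by (intro compact_Un compact_continuous_image continuous_on_Pair \<phi> \<psi>
        continuous_on_id compact_Icc)
  moreover have "C \<subseteq> Dom" using assms(4,5) by (auto simp: C_def)
  moreover have "\<forall>C. closed C \<and> bounded C \<and> C \<subseteq> Dom \<longrightarrow> (\<exists>L M. 0 \<le> L \<and> 0 \<le> M \<and>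
      (\<forall>f t f' t'. (f, t) \<in> C \<longrightarrow> (f', t') \<in> C \<longrightarrow>
         norm (P (f, t) - P (f', t')) \<le> L * norm (f - f') + M * \<bar>t - t'\<bar>))"
    using assms(1) unfolding P6_def by (rule conjunct2)
  ultimately obtain L M where "0 \<le> L" and Lip: "\<And>f t f' t'. (f, t) \<in> C \<Longrightarrow> (f', t') \<in> C \<Longrightarrow>
      norm (P (f, t) - P (f', t')) \<le> L * norm (f - f') + M * \<bar>t - t'\<bar>"
    using compact_imp_closed compact_imp_bounded by metis
  have graphs: "(\<phi> s, s) \<in> C" "(\<psi> s, s) \<in> C" if "s \<in> {t0..t1}" for s
    using that by (auto simp: C_def)
  show ?thesis
  proof
    show "norm (P (\<phi> s, s) - P (\<psi> s, s)) \<le> L * norm (\<phi> s - \<psi> s)" if "s \<in> {t0..t1}" for s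
      using Lip[OF graphs[OF that]] by simp
    show "continuous_on {t0..t1} (\<lambda>s. P (\<phi> s, s))"
      by (rule continuous_on_if_Lipschitz_along[OF \<phi> Lip[OF graphs(1) graphs(1)]])
    show "continuous_on {t0..t1} (\<lambda>s. P (\<psi> s, s))"
      by (rule continuous_on_if_Lipschitz_along[OF \<psi> Lip[OF graphs(2) graphs(2)]])
  qed fact
qed

theorem proposition2p5:
  fixes i :: "'f::banach \<Rightarrow> 'm::banach" and j :: "'p::banach \<Rightarrow> 'f"
    and A :: "'p \<Rightarrow> 'm" and S :: "real \<Rightarrow> 'm \<Rightarrow> 'm"
    and u um :: "real \<Rightarrow> real" and \<sigma> :: real
    and P :: "'f \<times> real \<Rightarrow> 'm" and Dom :: "('f \<times> real) set"
    and f0 :: 'f and t0 :: real and T T' :: ereal and \<phi> \<phi>' :: "real \<Rightarrow> 'f"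
  assumes "P1 i j" and "P2 i j A" and "P3 i j A S" and "P4 i S u"
    and "P5 i S um \<sigma>" and "P6 P Dom"
    and "(f0, t0) \<in> Dom"
    and "VP_solution i S P Dom f0 t0 T \<phi>"
    and "VP_solution i S P Dom f0 t0 T' \<phi>'"
  shows "\<forall>t. t0 \<le> t \<and> ereal t < min T T' \<longrightarrow> \<phi> t = \<phi>' t"
proof (intro allI impI)
  fix t1 assume t1: "t0 \<le> t1 \<and> ereal t1 < min T T'"
  then have "ereal t1 < T" "ereal t1 < T'" by auto
  note \<phi> = VP_solution_on_Icc[OF assms(8) this(1)] and \<phi>' = VP_solution_on_Icc[OF assms(9) this(2)]
  obtain L where "0 \<le> L"
    and Lip: "\<And>s. s \<in> {t0..t1} \<Longrightarrow> norm (P (\<phi> s, s) - P (\<phi>' s, s)) \<le> L * norm (\<phi> s - \<phi>' s)"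
    and P_cont: "continuous_on {t0..t1} (\<lambda>s. P (\<phi> s, s))" "continuous_on {t0..t1} (\<lambda>s. P (\<phi>' s, s))"
    using P6_Lipschitz_along_graphs[OF assms(6) \<phi>(1) \<phi>'(1) \<phi>(2) \<phi>'(2)] by blast
  obtain K r where "singular_smoothing i S K r \<sigma>"
    using singular_smoothing_if_P5[OF assms(1,3,5)] .
  then interpret singular_smoothing i S K r \<sigma> .
  have "\<phi> t1 - \<phi>' t1 = 0"
  proof (rule homogeneous_volterra_vanishes[of t0 t1 _ "\<lambda>s. P (\<phi> s, s) - P (\<phi>' s, s)", OF _ _ \<open>0 \<le> L\<close> Lip])
    show "((\<lambda>s. S (t - s) (P (\<phi> s, s) - P (\<phi>' s, s))) has_integral i (\<phi> t - \<phi>' t)) {t0..t}"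
      if "t \<in> {t0..t1}" for t
      by (rule has_integral_volterra_diff[OF \<phi>(3)[OF that] \<phi>'(3)[OF that]])
  qed (use t1 in \<open>auto intro!: continuous_on_diff \<phi>(1) \<phi>'(1) P_cont\<close>)
  then show "\<phi> t1 = \<phi>' t1" by simp
qed

end
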